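(* The following five definitions produce the same integer sequence, i.e. $a_n=b_n=c_n=d_n=e_n$ for all $n\ge 1$ (in particular each of these sequences is well defined): <ul> <li>$(a_n)_{n\ge1}$ is defined by $a_1=1$ and, for $n\ge 2$: $a_n=a_{n-1}+2$ if $n$ is in the sequence; $a_n=a_{n-1}+2$ if neither $n$ nor $n-1$ is in the sequence; $a_n=a_{n-1}+3$ if $n$ is not in the sequence but $n-1$ is in the sequence.</li> <li>$(b_n)_{n\ge1}$ is defined by $b_1=1$ and, for $n\ge 2$: $b_n=b_{n-1}+2$ if $n-1$ is not in the sequence; $b_n=b_{n-1}+3$ if $n-1$ is in the sequence.</li> <li>$c_n$ is the position of the $n$-th letter $0$ in the fixed point of the morphism $\phi$ on $\{0,1\}^*$ given by $\phi(0)=011$, $\phi(1)=01$.</li> <li>$d_n=\left\lfloor (1+\sqrt{2})\, n-\tfrac12\sqrt{2}\right\rfloor$ for $n\ge1$.</li> <li>$e_n=\lfloor r_n+\tfrac12\rfloor$, where $r_1=\tfrac{4}{\pi}$ and $r_{n+1}=\dfrac{n^2}{r_n-(2n-1)}$ for $n\ge1$.</li> </ul>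
   Context: In the definitions of $(a_n)$ and $(b_n)$, "$m$ is in the sequence" means that $m$ equals some term of that same sequence (the definitions are self-referential but determine the sequence recursively). The fixed point of $\phi$ is the infinite word $\lim_{k\to\infty}\phi^k(0)=0110101011010\cdots$ beginning with $0$; positions in this infinite word are numbered starting from $1$. *)

theory Defs
  imports Complex_Main
begin

text \<open>Sequences are indexed from 1; the value at index 0 is irrelevant.\<close>

definition isA :: "(nat \<Rightarrow> int) \<Rightarrow> bool" where
  "isA a \<longleftrightarrow> a 1 = 1 \<and>
     (\<forall>n\<ge>2.
        (int n \<in> a ` {1..} \<longrightarrow> a n = a (n-1) + 2) \<and>
        (int n \<notin> a ` {1..} \<and> int (n-1) \<notin> a ` {1..} \<longrightarrow> a n = a (n-1) + 2) \<and>
        (int n \<notin> a ` {1..} \<and> int (n-1) \<in> a ` {1..} \<longrightarrow> a n = a (n-1) + 3))"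

definition isB :: "(nat \<Rightarrow> int) \<Rightarrow> bool" where
  "isB b \<longleftrightarrow> b 1 = 1 \<and>
     (\<forall>n\<ge>2.
        (int (n-1) \<notin> b ` {1..} \<longrightarrow> b n = b (n-1) + 2) \<and>
        (int (n-1) \<in> b ` {1..} \<longrightarrow> b n = b (n-1) + 3))"

fun phi_letter :: "nat \<Rightarrow> nat list" where
  "phi_letter l = (if l = 0 then [0,1,1] else [0,1])"

definition phi :: "nat list \<Rightarrow> nat list" where
  "phi w = concat (map phi_letter w)"

text \<open>The fixed point lim phi^k(0) as an infinite word, positions numbered from 1:
  the letter at position i is the eventual value of the (i-1)-th entry of phi^k(0).\<close>
definition fixpt :: "nat \<Rightarrow> nat" where
  "fixpt i = (THE x. \<forall>\<^sub>F k in sequentially.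
       i - 1 < length ((phi ^^ k) [0]) \<and> (phi ^^ k) [0] ! (i - 1) = x)"

definition c_seq :: "nat \<Rightarrow> nat" where
  "c_seq n = (THE p. p \<ge> 1 \<and> fixpt p = 0 \<and> card {q \<in> {1..p}. fixpt q = 0} = n)"

definition d_seq :: "nat \<Rightarrow> int" where
  "d_seq n = \<lfloor>(1 + sqrt 2) * real n - sqrt 2 / 2\<rfloor>"

fun r_seq :: "nat \<Rightarrow> real" where
  "r_seq 0 = 0"
| "r_seq (Suc 0) = 4 / pi"
| "r_seq (Suc (Suc n)) = (real (Suc n))^2 / (r_seq (Suc n) - (2 * real (Suc n) - 1))"

definition e_seq :: "nat \<Rightarrow> int" where
  "e_seq n = \<lfloor>r_seq n + 1/2\<rfloor>"

end

theory Submission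
  imports Defs "HOL-Analysis.Analysis" "HOL-Real_Asymp.Real_Asymp"
begin

text \<open>
  Write \<open>d\<^sub>n = n + \<lfloor>\<theta>\<^sub>n\<rfloor>\<close> with \<open>\<theta>\<^sub>n = (2n - 1)/\<surd>2\<close>. Since \<open>\<theta>\<^sub>n\<^sub>+\<^sub>1 = \<theta>\<^sub>n + \<surd>2\<close>, every
  increment of \<open>d\<close> is 2 or 3, and a short computation with fractional parts shows that
  the increment after \<open>d\<^sub>n\<close> is 3 exactly when \<open>n\<close> is itself a value of \<open>d\<close>; in particular no
  two consecutive integers are values. Hence \<open>d\<close> satisfies both self-describing recurrences
  defining \<open>a\<close> and \<open>b\<close>, and these have at most one solution because the membership tests
  at step \<open>n\<close> only involve earlier terms. The same increment law says that the blocks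
  \<open>[d\<^sub>k, d\<^sub>k\<^sub>+\<^sub>1)\<close> of the characteristic word of the values of \<open>d\<close> read \<open>011\<close> or \<open>01\<close> according
  to whether \<open>k\<close> is a value, i.e. that this word is the fixed point of \<open>\<phi>\<close>.

  For \<open>e\<close>, put \<open>J\<^sub>n = \<integral>\<^sub>0\<^sup>1 q(t)\<^sup>n/(1 + t\<^sup>2) dt\<close> with \<open>q(t) = t(1 - t)/(1 + t\<^sup>2)\<close>. An explicit
  primitive gives \<open>n J\<^sub>n\<^sub>-\<^sub>1 = 2(2n + 1) J\<^sub>n + 4(n + 1) J\<^sub>n\<^sub>+\<^sub>1\<close> and \<open>J\<^sub>0 = \<pi>/4\<close>, whence
  \<open>r\<^sub>n = 2n - 1 + 2n J\<^sub>n/J\<^sub>n\<^sub>-\<^sub>1\<close>; as \<open>0 \<le> q \<le> 1/4\<close> this gives \<open>2n - 1 < r\<^sub>n \<le> 2n - 1 + n/2\<close>. The map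
  \<open>x \<mapsto> 2n - 1 + n\<^sup>2/x\<close> sends the window \<open>[\<alpha>(n + 1/2), \<alpha>(n + 1/2) + 1/(4\<alpha>(n + 1))]\<close>,
  \<open>\<alpha> = 1 + \<surd>2\<close>, into the corresponding window at \<open>n\<close> and contracts distances by 4, so the
  linear bounds force \<open>r\<^sub>n\<close> into the window. Rounding then gives \<open>d\<^sub>n\<close>, because an integer
  \<open>M\<close> that close above \<open>\<alpha>n - \<surd>2/2\<close> would make the norm of \<open>2(M - n) - \<surd>2(2n - 1)\<close> in
  \<open>\<int>[\<surd>2]\<close> a nonzero integer of absolute value below 2, yet it is even.
\<close>

section \<open>The Beatty sequence\<close>

lemma sqrt2_bounds: "1.41 < sqrt (2::real)" "sqrt (2::real) < 1.42"
proof -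
  show "1.41 < sqrt (2::real)"
    by (rule real_less_rsqrt) (simp add: power2_eq_square)
  have "sqrt (2::real) < sqrt (1.42\<^sup>2)"
    by (subst real_sqrt_less_iff) (simp add: power2_eq_square)
  then show "sqrt (2::real) < 1.42" by simp
qed

definition theta :: "int \<Rightarrow> real" where
  "theta m = sqrt 2 * (2 * of_int m - 1) / 2"

definition d_values :: "int set" where
  "d_values = d_seq ` {1..}"

lemma d_seq_eq_theta: "d_seq n = int n + \<lfloor>theta (int n)\<rfloor>"
proof -
  have "(1 + sqrt 2) * real n - sqrt 2 / 2 = theta (int n) + of_int (int n)"
    unfolding theta_def by (simp add: field_simps)
  then show ?thesis
    unfolding d_seq_def by (simp add: floor_add_int[symmetric])
qed

lemma theta_add_one: "theta (m + 1) = theta m + sqrt 2"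
  unfolding theta_def by (simp add: field_simps)

lemma sqrt2_mult_theta: "sqrt 2 * theta m = 2 * of_int m - 1"
  unfolding theta_def by (simp add: mult.assoc[symmetric])

lemma theta_not_int: "theta m \<noteq> of_int j"
proof
  assume "theta m = of_int j"
  then have "sqrt 2 * of_int (2 * m - 1) = 2 * of_int j"
    unfolding theta_def by (simp add: field_simps)
  then have "(sqrt 2 * of_int (2 * m - 1))\<^sup>2 = (2 * of_int j :: real)\<^sup>2"
    by simp
  then have "of_int ((2 * m - 1)\<^sup>2) = (of_int (2 * j\<^sup>2) :: real)"
    by (simp add: power_mult_distrib)
  then have "(2 * m - 1)\<^sup>2 = 2 * j\<^sup>2"
    by (simp only: of_int_eq_iff)
  then have "even ((2 * m - 1)\<^sup>2)"
    by simp
  then show False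
    by simp
qed

lemma floor_add_sqrt2: "\<lfloor>y + sqrt 2\<rfloor> = \<lfloor>y\<rfloor> + 1 \<or> \<lfloor>y + sqrt 2\<rfloor> = \<lfloor>y\<rfloor> + 2"
proof -
  have "of_int (\<lfloor>y\<rfloor> + 1) \<le> y + sqrt 2" "y + sqrt 2 < of_int (\<lfloor>y\<rfloor> + 2) + 1"
    using sqrt2_bounds by simp_all linarith+
  then have "\<lfloor>y\<rfloor> + 1 \<le> \<lfloor>y + sqrt 2\<rfloor>" "\<lfloor>y + sqrt 2\<rfloor> \<le> \<lfloor>y\<rfloor> + 2"
    unfolding le_floor_iff floor_le_iff .
  then show ?thesis
    by linarith
qed

lemma theta_jump_at_beatty:
  fixes k :: int
  defines "m \<equiv> k + \<lfloor>theta k\<rfloor>"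
  shows "\<lfloor>theta m + sqrt 2\<rfloor> = \<lfloor>theta m\<rfloor> + 2"
proof -
  define s where "s = sqrt (2::real)"
  have s: "1.41 < s" "s < 1.42"
    unfolding s_def using sqrt2_bounds by auto
  define N where "N = \<lfloor>theta k\<rfloor> + 2 * k - 1"
  define g where "g = theta k - of_int \<lfloor>theta k\<rfloor>"
  have "0 \<le> g" "g < 1"
    unfolding g_def by linarith+
  moreover have "g \<noteq> 0"
    unfolding g_def using theta_not_int[of k "\<lfloor>theta k\<rfloor>"] by simp
  ultimately have g: "0 < g" "g < 1"
    by simp_all
  have "theta m = theta k + s * of_int \<lfloor>theta k\<rfloor>"
    unfolding theta_def m_def s_def by (simp add: field_simps)
  also have "\<dots> = theta k + s * theta k - s * g"
    unfolding g_def by (simp add: algebra_simps)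
  also have "\<dots> = of_int N + g * (1 - s)"
    using sqrt2_mult_theta[of k] unfolding N_def g_def s_def by (simp add: algebra_simps)
  finally have theta_m: "theta m = of_int N + g * (1 - s)" .
  \<comment> \<open>so the fractional part of \<open>theta m\<close> is \<open>1 - g (\<surd>2 - 1) > 2 - \<surd>2\<close>\<close>
  have gs: "0 < g * (s - 1)" "g * (s - 1) < s - 1"
    using g s by simp_all
  have "\<lfloor>theta m\<rfloor> = N - 1"
    by (rule floor_unique) (use gs s in \<open>simp_all add: theta_m algebra_simps\<close>)
  moreover have "\<lfloor>theta m + sqrt 2\<rfloor> = N + 1"
    by (rule floor_unique) (use gs s in \<open>simp_all add: theta_m s_def[symmetric] algebra_simps\<close>)
  ultimately show ?thesis
    by simp
qed

lemma theta_jump_imp_beatty: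
  assumes "m \<ge> 1" and jump: "\<lfloor>theta m + sqrt 2\<rfloor> = \<lfloor>theta m\<rfloor> + 2"
  shows "\<exists>k\<ge>1. m = k + \<lfloor>theta k\<rfloor>"
proof -
  define s where "s = sqrt (2::real)"
  have s: "1.41 < s" "s < 1.42"
    unfolding s_def using sqrt2_bounds by auto
  define N where "N = \<lfloor>theta m\<rfloor>"
  define y where "y = theta m"
  \<comment> \<open>the preimage is read off from \<open>theta k + theta m = \<surd>2 (N + 1)\<close>\<close>
  define k where "k = N + 2 - m"
  have y: "of_int N \<le> y" "y < of_int N + 1"
    unfolding N_def y_def by linarith+
  have sy: "s * y = 2 * of_int m - 1"
    unfolding y_def s_def by (rule sqrt2_mult_theta)
  have "of_int N + 2 \<le> y + s"
    using jump of_int_floor_le[of "theta m + sqrt 2"] unfolding N_def y_def s_def by simp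
  moreover have "y + s \<noteq> of_int (N + 2)"
    using theta_not_int[of "m + 1" "N + 2"] unfolding y_def s_def theta_add_one by simp
  ultimately have y_gt: "of_int N + 2 - s < y"
    by simp
  have theta_k: "theta k = s * (of_int N + 1) - y"
    unfolding theta_def k_def y_def s_def by (simp add: field_simps)
  have "(1 + s) * y \<le> (1 + s) * (of_int N + 1)"
    using y s by (intro mult_left_mono) auto
  then have lower: "of_int (m - k) \<le> theta k"
    unfolding theta_k unfolding k_def using sy by (simp add: algebra_simps)
  have "(1 + s) * (of_int N + 2 - s) < (1 + s) * y"
    using y_gt s by (intro mult_strict_left_mono) auto
  moreover have "(1 + s) * (of_int N + 2 - s) = s * (of_int N + 1) + of_int N"
    using s_def by (simp add: algebra_simps)
  ultimately have upper: "theta k < of_int (m - k) + 1"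
    unfolding theta_k unfolding k_def using sy by (simp add: algebra_simps)
  have "y + 1 - of_int m = (of_int m - 1) * (s - 1) + s / 2"
    unfolding y_def theta_def s_def by (simp add: field_simps)
  moreover have "0 \<le> (of_int m - 1) * (s - 1)"
    using assms(1) s by simp
  ultimately have "(0::real) < of_int k"
    unfolding k_def using y s by simp
  moreover have "\<lfloor>theta k\<rfloor> = m - k"
    using lower upper by (rule floor_unique)
  ultimately show ?thesis
    by (intro exI[of _ k]) simp
qed

lemma mem_d_values_iff: "m \<in> d_values \<longleftrightarrow> m \<ge> 1 \<and> \<lfloor>theta m + sqrt 2\<rfloor> = \<lfloor>theta m\<rfloor> + 2"
proof
  assume "m \<in> d_values"
  then obtain n where n: "n \<ge> 1" "m = int n + \<lfloor>theta (int n)\<rfloor>"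
    unfolding d_values_def d_seq_eq_theta by auto
  moreover have "0 \<le> \<lfloor>theta (int n)\<rfloor>"
    using n(1) unfolding zero_le_floor theta_def by simp
  ultimately have "m \<ge> 1"
    by linarith
  then show "m \<ge> 1 \<and> \<lfloor>theta m + sqrt 2\<rfloor> = \<lfloor>theta m\<rfloor> + 2"
    using theta_jump_at_beatty[of "int n"] n(2) by simp
next
  assume "m \<ge> 1 \<and> \<lfloor>theta m + sqrt 2\<rfloor> = \<lfloor>theta m\<rfloor> + 2"
  then obtain k where "k \<ge> 1" "m = k + \<lfloor>theta k\<rfloor>"
    using theta_jump_imp_beatty by blast
  then have "m = d_seq (nat k)" "nat k \<ge> 1"
    using d_seq_eq_theta[of "nat k"] by simp_all
  then show "m \<in> d_values"
    unfolding d_values_def by auto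
qed

lemma d_seq_Suc:
  assumes "n \<ge> 1"
  shows "d_seq (Suc n) = d_seq n + (if int n \<in> d_values then 3 else 2)"
proof -
  have "d_seq (Suc n) = d_seq n + 1 + (\<lfloor>theta (int n) + sqrt 2\<rfloor> - \<lfloor>theta (int n)\<rfloor>)"
    unfolding d_seq_eq_theta using theta_add_one[of "int n"] by (simp add: add.commute)
  then show ?thesis
    using floor_add_sqrt2[of "theta (int n)"] mem_d_values_iff[of "int n"] assms by auto
qed

text \<open>The junk value at index 0 makes \<open>d_seq\<close> strictly increasing on all of \<open>\<nat>\<close>.\<close>

lemma d_seq_0: "d_seq 0 = -1"
  unfolding d_seq_def using sqrt2_bounds by (simp add: floor_eq_iff)

lemma d_seq_1: "d_seq 1 = 1"
  unfolding d_seq_def using sqrt2_bounds by (simp add: floor_eq_iff)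

lemma d_seq_Suc_ge: "d_seq n + 2 \<le> d_seq (Suc n)"
  using d_seq_Suc[of n] by (cases "n = 0") (auto simp: d_seq_0 d_seq_1[unfolded One_nat_def])

lemma strict_mono_d_seq: "strict_mono d_seq"
proof (rule strict_monoI_Suc)
  show "d_seq n < d_seq (Suc n)" for n
    using d_seq_Suc_ge[of n] by linarith
qed

lemma d_seq_lower: "2 * int n - 1 \<le> d_seq n"
proof (induction n)
  case (Suc n)
  then show ?case
    using d_seq_Suc_ge[of n] by simp
qed (simp add: d_seq_0)

lemma not_in_d_values_between:
  assumes "d_seq k < i" "i < d_seq (Suc k)"
  shows "i \<notin> d_values"
proof
  assume "i \<in> d_values"
  then obtain j where "i = d_seq j"
    unfolding d_values_def by auto
  then have "k < j" "j < Suc k"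
    using assms strict_mono_less[OF strict_mono_d_seq] by auto
  then show False
    by simp
qed

lemma d_values_Suc_not_mem:
  assumes "m \<in> d_values"
  shows "m + 1 \<notin> d_values"
proof -
  obtain k where "m = d_seq k"
    using assms unfolding d_values_def by auto
  then show ?thesis
    using d_seq_Suc_ge[of k] by (intro not_in_d_values_between[of k]) auto
qed

section \<open>Self-generating sequences\<close>

definition self_generating :: "(bool \<Rightarrow> bool \<Rightarrow> int) \<Rightarrow> (nat \<Rightarrow> int) \<Rightarrow> bool" where
  "self_generating F f \<longleftrightarrow> f 1 = 1 \<and>
     (\<forall>n\<ge>2. f n = f (n - 1) + F (int n \<in> f ` {1..}) (int (n - 1) \<in> f ` {1..}))"

lemma self_generatingD:
  assumes "self_generating F f" "n \<ge> 2"
  shows "f n = f (n - 1) + F (int n \<in> f ` {1..}) (int (n - 1) \<in> f ` {1..})"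
  using assms unfolding self_generating_def by blast

lemma self_generating_lower:
  assumes "self_generating F f" "\<And>x y. 2 \<le> F x y" "k \<ge> 1"
  shows "2 * int k - 1 \<le> f k"
  using assms(3)
proof (induction k rule: dec_induct)
  case base
  then show ?case
    using assms(1) unfolding self_generating_def by simp
next
  case (step k)
  have "f (Suc k) = f k + F (int (Suc k) \<in> f ` {1..}) (int k \<in> f ` {1..})"
    using self_generatingD[OF assms(1), of "Suc k"] step.hyps(1) by simp
  moreover have "2 \<le> F (int (Suc k) \<in> f ` {1..}) (int k \<in> f ` {1..})"
    by (rule assms(2))
  ultimately show ?case
    using step.IH by simp
qed

lemma self_generating_mem_iff:
  assumes "self_generating F f" "\<And>x y. 2 \<le> F x y" "n \<ge> 2" "j \<le> n"
  shows "int j \<in> f ` {1..} \<longleftrightarrow> (\<exists>k\<in>{1..<n}. f k = int j)"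
proof
  assume "int j \<in> f ` {1..}"
  then obtain k where "k \<ge> 1" "f k = int j"
    by auto
  moreover have "2 * int k - 1 \<le> f k"
    using self_generating_lower[OF assms(1,2) \<open>k \<ge> 1\<close>] .
  ultimately show "\<exists>k\<in>{1..<n}. f k = int j"
    using assms(3,4) by (intro bexI[of _ k]) auto
next
  assume "\<exists>k\<in>{1..<n}. f k = int j"
  then obtain k where "k \<ge> 1" "f k = int j"
    by auto
  then show "int j \<in> f ` {1..}"
    by (metis atLeast_iff image_eqI)
qed

lemma self_generating_unique:
  assumes F: "\<And>x y. 2 \<le> F x y" and f: "self_generating F f" and g: "self_generating F g"
  shows "n \<ge> 1 \<Longrightarrow> f n = g n"
proof (induction n rule: less_induct)
  case (less n)
  show ?case
  proof (cases "n = 1")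
    case True
    then show ?thesis
      using f g unfolding self_generating_def by simp
  next
    case False
    then have "n \<ge> 2"
      using less.prems by simp
    have same: "int j \<in> f ` {1..} \<longleftrightarrow> int j \<in> g ` {1..}" if "j \<le> n" for j
      using self_generating_mem_iff[OF f F \<open>n \<ge> 2\<close> that]
        self_generating_mem_iff[OF g F \<open>n \<ge> 2\<close> that] less.IH by auto
    have "f (n - 1) = g (n - 1)"
      using less.IH \<open>n \<ge> 2\<close> by simp
    then show ?thesis
      using self_generatingD[OF f \<open>n \<ge> 2\<close>] self_generatingD[OF g \<open>n \<ge> 2\<close>]
        same[of n] same[of "n - 1"] by simp
  qed
qed

lemma self_generating_iff_eq:
  assumes "\<And>x y. 2 \<le> F x y" "self_generating F g"
  shows "self_generating F f \<longleftrightarrow> (\<forall>n\<ge>1. f n = g n)"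
proof
  assume "self_generating F f"
  then show "\<forall>n\<ge>1. f n = g n"
    using self_generating_unique[OF assms(1) _ assms(2)] by blast
next
  assume eq: "\<forall>n\<ge>1. f n = g n"
  then have "f ` {1..} = g ` {1..}"
    by (auto intro!: image_cong)
  moreover have "f n = g n" "f (n - 1) = g (n - 1)" if "n \<ge> 2" for n
    using eq that by simp_all
  ultimately show "self_generating F f"
    using assms(2) eq unfolding self_generating_def by simp
qed

lemma isA_iff_self_generating: "isA a \<longleftrightarrow> self_generating (\<lambda>x y. if \<not> x \<and> y then 3 else 2) a"
  unfolding isA_def self_generating_def by (intro conj_cong refl all_cong1 imp_cong) auto

lemma isB_iff_self_generating: "isB b \<longleftrightarrow> self_generating (\<lambda>x y. if y then 3 else 2) b"
  unfolding isB_def self_generating_def by (intro conj_cong refl all_cong1 imp_cong) auto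

lemma d_seq_step:
  assumes "n \<ge> 2"
  shows "d_seq n = d_seq (n - 1) + (if int (n - 1) \<in> d_values then 3 else 2)"
  using d_seq_Suc[of "n - 1"] assms by simp

lemma self_generating_d_seq_A: "self_generating (\<lambda>x y. if \<not> x \<and> y then 3 else 2) d_seq"
proof -
  have "\<not> (int n \<in> d_values \<and> int (n - 1) \<in> d_values)" if "n \<ge> 2" for n
    using d_values_Suc_not_mem[of "int (n - 1)"] that by (auto simp: of_nat_diff)
  then show ?thesis
    unfolding self_generating_def d_values_def[symmetric] using d_seq_1 d_seq_step by auto
qed

lemma self_generating_d_seq_B: "self_generating (\<lambda>x y. if y then 3 else 2) d_seq"
  unfolding self_generating_def d_values_def[symmetric] using d_seq_1 d_seq_step by auto

section \<open>The fixed point of the morphism\<close>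

definition beatty_word :: "nat \<Rightarrow> nat" where
  "beatty_word i = (if int i \<in> d_values then 0 else 1)"

definition d_nat :: "nat \<Rightarrow> nat" where
  "d_nat k = nat (d_seq k)"

lemma of_nat_d_nat: "k \<ge> 1 \<Longrightarrow> int (d_nat k) = d_seq k"
  unfolding d_nat_def using d_seq_lower[of k] by simp

lemma d_nat_le_iff: "1 \<le> j \<Longrightarrow> 1 \<le> k \<Longrightarrow> d_nat j \<le> d_nat k \<longleftrightarrow> j \<le> k"
  using strict_mono_less_eq[OF strict_mono_d_seq, of j k] of_nat_d_nat[of j] of_nat_d_nat[of k]
  by linarith

lemma d_nat_1: "d_nat 1 = 1"
  unfolding d_nat_def d_seq_1 by simp

lemma d_nat_lower: "k \<ge> 1 \<Longrightarrow> 2 * k - 1 \<le> d_nat k"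
  using d_seq_lower[of k] of_nat_d_nat[of k] by linarith

lemma beatty_word_d_nat: "k \<ge> 1 \<Longrightarrow> beatty_word (d_nat k) = 0"
  unfolding beatty_word_def d_values_def using of_nat_d_nat[of k] by auto

lemma beatty_word_between:
  "k \<ge> 1 \<Longrightarrow> d_nat k < i \<Longrightarrow> i < d_nat (Suc k) \<Longrightarrow> beatty_word i = 1"
  unfolding beatty_word_def using not_in_d_values_between[of k "int i"]
    of_nat_d_nat[of k] of_nat_d_nat[of "Suc k"] by simp

lemma beatty_word_block:
  assumes "k \<ge> 1"
  shows "map beatty_word [d_nat k..<d_nat (Suc k)] = phi_letter (beatty_word k)"
proof -
  define A where "A = d_nat k"
  have step: "d_nat (Suc k) = A + (if int k \<in> d_values then 3 else 2)"
    using d_seq_Suc[OF assms] of_nat_d_nat[OF assms] of_nat_d_nat[of "Suc k"] unfolding A_def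
    by (simp split: if_splits; linarith)
  have "beatty_word A = 0"
    unfolding A_def using assms by (rule beatty_word_d_nat)
  moreover have "beatty_word (A + 1) = 1"
    using assms by (rule beatty_word_between) (use step in \<open>simp_all add: A_def\<close>)
  moreover have "beatty_word (A + 2) = 1" if "int k \<in> d_values"
    using assms by (rule beatty_word_between) (use step that in \<open>simp_all add: A_def\<close>)
  ultimately show ?thesis
    unfolding A_def[symmetric] step beatty_word_def[of k]
    by (simp add: upt_rec numeral_2_eq_2 numeral_3_eq_3)
qed

lemma phi_append: "phi (xs @ ys) = phi xs @ phi ys"
  unfolding phi_def by simp

lemma phi_beatty_prefix: "phi (map beatty_word [1..<L + 1]) = map beatty_word [1..<d_nat (L + 1)]"
proof (induction L)
  case 0
  then show ?case
    by (simp add: phi_def d_nat_1[unfolded One_nat_def])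
next
  case (Suc L)
  have "1 \<le> d_nat (L + 1)" "d_nat (L + 1) \<le> d_nat (Suc (L + 1))"
    using d_nat_le_iff[of 1 "L + 1"] d_nat_le_iff[of "L + 1" "Suc (L + 1)"] d_nat_1 by simp_all
  then have split: "[1..<d_nat (L + 1)] @ [d_nat (L + 1)..<d_nat (Suc (L + 1))] = [1..<d_nat (Suc L + 1)]"
    using upt_add_eq_append[of 1 "d_nat (L + 1)" "d_nat (Suc (L + 1)) - d_nat (L + 1)"] by simp
  have "[1..<Suc L + 1] = [1..<L + 1] @ [L + 1]"
    by simp
  then have "phi (map beatty_word [1..<Suc L + 1])
      = phi (map beatty_word [1..<L + 1]) @ phi_letter (beatty_word (L + 1))"
    by (simp only: map_append phi_append) (simp add: phi_def)
  also have "\<dots> = map beatty_word ([1..<d_nat (L + 1)] @ [d_nat (L + 1)..<d_nat (Suc (L + 1))])"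
    unfolding Suc.IH beatty_word_block[OF le_add2] map_append ..
  finally show ?case
    unfolding split .
qed

lemma phi_power_prefix: "\<exists>l\<ge>k + 1. (phi ^^ k) [0] = map beatty_word [1..<l + 1]"
proof (induction k)
  case 0
  have "beatty_word 1 = 0"
    using beatty_word_d_nat[of 1] by (simp only: d_nat_1 order.refl)
  then show ?case
    by (intro exI[of _ 1]) simp
next
  case (Suc k)
  then obtain l where l: "l \<ge> k + 1" "(phi ^^ k) [0] = map beatty_word [1..<l + 1]"
    by blast
  have "(phi ^^ Suc k) [0] = map beatty_word [1..<(d_nat (l + 1) - 1) + 1]"
    using l(2) phi_beatty_prefix d_nat_lower[of "l + 1"] by simp
  moreover have "d_nat (l + 1) - 1 \<ge> Suc k + 1"
    using l(1) d_nat_lower[of "l + 1"] by simp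
  ultimately show ?case
    by blast
qed

lemma fixpt_eq_beatty_word:
  assumes "i \<ge> 1"
  shows "fixpt i = beatty_word i"
proof -
  define P where "P x k \<longleftrightarrow> i - 1 < length ((phi ^^ k) [0]) \<and> (phi ^^ k) [0] ! (i - 1) = x" for x k
  have "P (beatty_word i) k" if "k \<ge> i" for k
  proof -
    obtain l where "l \<ge> k + 1" "(phi ^^ k) [0] = map beatty_word [1..<l + 1]"
      using phi_power_prefix by blast
    then show ?thesis
      unfolding P_def using that assms by (simp add: nth_map_upt del: upt_Suc)
  qed
  then have ev: "\<forall>\<^sub>F k in sequentially. P (beatty_word i) k"
    unfolding eventually_sequentially by blast
  show ?thesis
    unfolding fixpt_def P_def[symmetric]
  proof (rule the_equality)
    fix x
    assume "\<forall>\<^sub>F k in sequentially. P x k"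
    then obtain N where "\<forall>k\<ge>N. P x k \<and> P (beatty_word i) k"
      using eventually_conj[OF _ ev] unfolding eventually_sequentially by blast
    then show "x = beatty_word i"
      unfolding P_def by auto
  qed (rule ev)
qed

lemma fixpt_eq_0_iff: "p \<ge> 1 \<Longrightarrow> fixpt p = 0 \<longleftrightarrow> int p \<in> d_values"
  by (simp add: fixpt_eq_beatty_word beatty_word_def)

lemma card_fixpt_zeros:
  assumes "k \<ge> 1"
  shows "card {q \<in> {1..d_nat k}. fixpt q = 0} = k"
proof -
  have "{q \<in> {1..d_nat k}. fixpt q = 0} = d_nat ` {1..k}"
  proof (intro equalityI subsetI)
    fix q
    assume "q \<in> {q \<in> {1..d_nat k}. fixpt q = 0}"
    then have q: "1 \<le> q" "q \<le> d_nat k" "int q \<in> d_values"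
      using fixpt_eq_0_iff by auto
    then obtain j where j: "j \<ge> 1" "int q = d_seq j"
      unfolding d_values_def by auto
    then have "q = d_nat j"
      using of_nat_d_nat[OF j(1)] by simp
    then show "q \<in> d_nat ` {1..k}"
      using q(2) j(1) assms d_nat_le_iff by auto
  next
    fix q
    assume "q \<in> d_nat ` {1..k}"
    then obtain j where j: "1 \<le> j" "j \<le> k" "q = d_nat j"
      by auto
    then have "1 \<le> q" "q \<le> d_nat k"
      using d_nat_le_iff[of 1 j] d_nat_le_iff[of j k] d_nat_1 by simp_all
    then show "q \<in> {q \<in> {1..d_nat k}. fixpt q = 0}"
      using fixpt_eq_beatty_word beatty_word_d_nat j by simp
  qed
  moreover have "inj_on d_nat {1..k}"
  proof (rule inj_onI)
    fix x y
    assume "x \<in> {1..k}" "y \<in> {1..k}" "d_nat x = d_nat y"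
    then show "x = y"
      using d_nat_le_iff[of x y] d_nat_le_iff[of y x] by simp
  qed
  ultimately show ?thesis
    by (simp add: card_image)
qed

lemma c_seq_eq_d_nat:
  assumes "n \<ge> 1"
  shows "c_seq n = d_nat n"
  unfolding c_seq_def
proof (rule the_equality)
  show "d_nat n \<ge> 1 \<and> fixpt (d_nat n) = 0 \<and> card {q \<in> {1..d_nat n}. fixpt q = 0} = n"
    using d_nat_le_iff[of 1 n] d_nat_1 assms fixpt_eq_beatty_word beatty_word_d_nat card_fixpt_zeros
    by simp
next
  fix p
  assume p: "p \<ge> 1 \<and> fixpt p = 0 \<and> card {q \<in> {1..p}. fixpt q = 0} = n"
  then have "int p \<in> d_values"
    using fixpt_eq_0_iff by blast
  then obtain j where j: "j \<ge> 1" "p = d_nat j"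
    unfolding d_values_def using of_nat_d_nat by (metis atLeast_iff image_iff of_nat_eq_iff)
  then show "p = d_nat n"
    using p card_fixpt_zeros[OF j(1)] by simp
qed

section \<open>Brouncker's integrals\<close>

definition brouncker_q :: "real \<Rightarrow> real" where
  "brouncker_q t = t * (1 - t) / (1 + t\<^sup>2)"

definition brouncker_kernel :: "nat \<Rightarrow> real \<Rightarrow> real" where
  "brouncker_kernel n t = brouncker_q t ^ n / (1 + t\<^sup>2)"

definition brouncker_integral :: "nat \<Rightarrow> real" where
  "brouncker_integral n = integral {0..1} (brouncker_kernel n)"

lemma one_plus_square_neq_zero: "1 + (t::real)\<^sup>2 \<noteq> 0"
  using zero_le_power2[of t] by linarith

lemma brouncker_q_deriv:
  "(brouncker_q has_real_derivative (1 - 2 * t - t\<^sup>2) / (1 + t\<^sup>2)\<^sup>2) (at t)"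
  unfolding brouncker_q_def[abs_def]
  by (rule derivative_eq_intros refl one_plus_square_neq_zero)+
     (simp add: power2_eq_square algebra_simps)

lemma brouncker_slope_deriv:
  "((\<lambda>t. (1 - 2 * t - t\<^sup>2) / (1 + t\<^sup>2)) has_real_derivative
     - (2 + 4 * brouncker_q t) / (1 + t\<^sup>2)) (at t)"
proof -
  have S: "1 + t\<^sup>2 \<noteq> 0" by (rule one_plus_square_neq_zero)
  show ?thesis
    unfolding brouncker_q_def
    by (rule derivative_eq_intros refl S)+
       (use S in \<open>simp add: divide_simps, simp add: algebra_simps power2_eq_square\<close>)
qed

lemma brouncker_slope_square:
  "((1 - 2 * t - t\<^sup>2) / (1 + t\<^sup>2))\<^sup>2 = 1 - 4 * brouncker_q t - 4 * (brouncker_q t)\<^sup>2"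
proof -
  have "(1 - 2 * t - t\<^sup>2)\<^sup>2 = (1 + t\<^sup>2)\<^sup>2 - 4 * (t * (1 - t)) * (1 + t\<^sup>2) - 4 * (t * (1 - t))\<^sup>2"
    by (simp add: algebra_simps power2_eq_square)
  then have "((1 - 2 * t - t\<^sup>2) / (1 + t\<^sup>2))\<^sup>2
      = ((1 + t\<^sup>2)\<^sup>2 - 4 * (t * (1 - t)) * (1 + t\<^sup>2) - 4 * (t * (1 - t))\<^sup>2) / (1 + t\<^sup>2)\<^sup>2"
    by (simp add: power_divide)
  also have "\<dots> = 1 - 4 * brouncker_q t - 4 * (brouncker_q t)\<^sup>2"
    unfolding brouncker_q_def using one_plus_square_neq_zero[of t]
    by (simp add: diff_divide_distrib power2_eq_square)
  finally show ?thesis .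
qed

lemma brouncker_primitive_deriv:
  "((\<lambda>t. brouncker_q t ^ n * ((1 - 2 * t - t\<^sup>2) / (1 + t\<^sup>2))) has_real_derivative
     real n * brouncker_kernel (n - 1) t - 2 * (2 * real n + 1) * brouncker_kernel n t
       - 4 * (real n + 1) * brouncker_kernel (n + 1) t) (at t)"
proof (rule DERIV_cong[OF DERIV_mult'[OF DERIV_power[OF brouncker_q_deriv] brouncker_slope_deriv]])
  define q S P where "q = brouncker_q t" and "S = 1 + t\<^sup>2" and "P = 1 - 2 * t - t\<^sup>2"
  have "S \<noteq> 0" unfolding S_def by (rule one_plus_square_neq_zero)
  have pow: "real n * q ^ (n - Suc 0) * q = real n * q ^ n"
    by (cases n) simp_all
  have "q ^ n * (- (2 + 4 * q) / S) + real n * (P / S\<^sup>2 * q ^ (n - Suc 0)) * (P / S)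
      = (real n * q ^ (n - Suc 0) * (P / S)\<^sup>2 - (2 + 4 * q) * q ^ n) / S"
    using \<open>S \<noteq> 0\<close> by (simp add: field_simps power2_eq_square)
  also have "\<dots> = (real n * q ^ (n - Suc 0) * (1 - 4 * q - 4 * q\<^sup>2) - (2 + 4 * q) * q ^ n) / S"
    unfolding q_def S_def P_def brouncker_slope_square ..
  also have "\<dots> = (real n * q ^ (n - Suc 0) - 4 * (real n * q ^ (n - Suc 0) * q)
      - 4 * (real n * q ^ (n - Suc 0) * q) * q - (2 + 4 * q) * q ^ n) / S"
    by (simp add: algebra_simps power2_eq_square)
  also have "\<dots> = real n * (q ^ (n - 1) / S) - 2 * (2 * real n + 1) * (q ^ n / S)
      - 4 * (real n + 1) * (q ^ (n + 1) / S)"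
    unfolding pow using \<open>S \<noteq> 0\<close> by (simp add: field_simps)
  finally show "q ^ n * (- (2 + 4 * q) / S) + real n * (P / S\<^sup>2 * q ^ (n - Suc 0)) * (P / S)
      = real n * brouncker_kernel (n - 1) t - 2 * (2 * real n + 1) * brouncker_kernel n t
        - 4 * (real n + 1) * brouncker_kernel (n + 1) t"
    unfolding brouncker_kernel_def q_def S_def .
qed

lemma continuous_on_brouncker_kernel: "continuous_on A (brouncker_kernel n)"
  unfolding brouncker_kernel_def brouncker_q_def
  by (intro continuous_intros) (simp_all add: one_plus_square_neq_zero)

lemma brouncker_kernel_has_integral:
  "(brouncker_kernel n has_integral brouncker_integral n) {0..1}"
  unfolding brouncker_integral_def
  by (intro integrable_integral integrable_continuous_real continuous_on_brouncker_kernel)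

lemma brouncker_integral_recurrence:
  "real n * brouncker_integral (n - 1) - 2 * (2 * real n + 1) * brouncker_integral n
     - 4 * (real n + 1) * brouncker_integral (n + 1) = (if n = 0 then -2 else 0)"
proof -
  let ?G = "\<lambda>t. brouncker_q t ^ n * ((1 - 2 * t - t\<^sup>2) / (1 + t\<^sup>2))"
  let ?g = "\<lambda>t. real n * brouncker_kernel (n - 1) t - 2 * (2 * real n + 1) * brouncker_kernel n t
      - 4 * (real n + 1) * brouncker_kernel (n + 1) t"
  have "(?g has_integral ?G 1 - ?G 0) {0..1}"
  proof (rule fundamental_theorem_of_calculus)
    show "(?G has_vector_derivative ?g x) (at x within {0..1})" for x
      unfolding has_real_derivative_iff_has_vector_derivative[symmetric]
      by (rule has_field_derivative_at_within[OF brouncker_primitive_deriv])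
  qed simp
  moreover have "?G 1 - ?G 0 = (if n = 0 then -2 else 0)"
    by (simp add: brouncker_q_def)
  ultimately have "(?g has_integral (if n = 0 then -2 else 0)) {0..1}"
    by simp
  moreover have "(?g has_integral
      real n * brouncker_integral (n - 1) - 2 * (2 * real n + 1) * brouncker_integral n
        - 4 * (real n + 1) * brouncker_integral (n + 1)) {0..1}"
    by (intro has_integral_diff has_integral_mult_right brouncker_kernel_has_integral)
  ultimately show ?thesis
    by (rule has_integral_unique[rotated])
qed

lemma brouncker_q_bounds:
  assumes "t \<in> {0..1}"
  shows "0 \<le> brouncker_q t" "brouncker_q t \<le> 1 / 4"
proof -
  have "0 \<le> t * (1 - t)" using assms by simp
  then show "0 \<le> brouncker_q t"
    unfolding brouncker_q_def by simp
  have "t * (1 - t) \<le> 1 / 4"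
    using zero_le_power2[of "t - 1 / 2"] by (simp add: power2_eq_square algebra_simps)
  moreover have "t * (1 - t) / (1 + t\<^sup>2) \<le> t * (1 - t)"
    using \<open>0 \<le> t * (1 - t)\<close> by (simp add: divide_le_eq add_pos_nonneg) (simp add: mult_le_cancel_left1)
  ultimately show "brouncker_q t \<le> 1 / 4"
    unfolding brouncker_q_def by linarith
qed

lemma brouncker_kernel_nonneg: "t \<in> {0..1} \<Longrightarrow> 0 \<le> brouncker_kernel n t"
  unfolding brouncker_kernel_def using brouncker_q_bounds(1) by simp

lemma brouncker_integral_pos: "0 < brouncker_integral n"
proof -
  have "0 \<le> brouncker_integral n"
    using brouncker_kernel_has_integral brouncker_kernel_nonneg by (rule has_integral_nonneg)
  moreover have "brouncker_integral n \<noteq> 0"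
  proof
    assume "brouncker_integral n = 0"
    then have "\<forall>t\<in>{0..1}. brouncker_kernel n t = 0"
      unfolding brouncker_integral_def
      using integral_eq_0_iff[OF continuous_on_brouncker_kernel] brouncker_kernel_nonneg by auto
    moreover have "0 < brouncker_kernel n (1 / 2)"
      by (simp add: brouncker_kernel_def brouncker_q_def power2_eq_square)
    ultimately show False by simp
  qed
  ultimately show ?thesis by simp
qed

lemma brouncker_integral_Suc_le: "brouncker_integral (Suc n) \<le> brouncker_integral n / 4"
proof -
  have "brouncker_kernel (Suc n) t \<le> brouncker_kernel n t / 4" if "t \<in> {0..1}" for t
  proof -
    have "brouncker_kernel (Suc n) t = brouncker_q t * brouncker_kernel n t"
      unfolding brouncker_kernel_def by simp
    also have "\<dots> \<le> 1 / 4 * brouncker_kernel n t"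
      by (intro mult_right_mono brouncker_q_bounds brouncker_kernel_nonneg that)
    finally show ?thesis by simp
  qed
  then show ?thesis
    using has_integral_le[OF brouncker_kernel_has_integral has_integral_divide[OF brouncker_kernel_has_integral]]
    by blast
qed

lemma brouncker_integral_0: "brouncker_integral 0 = pi / 4"
proof -
  have "((\<lambda>t. 1 / (1 + t\<^sup>2)) has_integral arctan 1 - arctan 0) {0..1}"
  proof (rule fundamental_theorem_of_calculus)
    show "(arctan has_vector_derivative 1 / (1 + x\<^sup>2)) (at x within {0..1})" for x
      unfolding has_real_derivative_iff_has_vector_derivative[symmetric]
      by (rule has_field_derivative_at_within[OF DERIV_arctan[THEN DERIV_cong]])
         (simp add: divide_inverse)
  qed simp
  moreover have "brouncker_kernel 0 = (\<lambda>t. 1 / (1 + t\<^sup>2))"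
    by (simp add: fun_eq_iff brouncker_kernel_def)
  ultimately show ?thesis
    using has_integral_unique[OF brouncker_kernel_has_integral[of 0]] by simp
qed

lemma brouncker_integral_1: "brouncker_integral 1 = (4 - pi) / 8"
  using brouncker_integral_recurrence[of 0] by (simp add: brouncker_integral_0)

lemma r_seq_eq_brouncker_integral:
  "r_seq (Suc m) = 2 * real (Suc m) - 1
     + 2 * real (Suc m) * brouncker_integral (Suc m) / brouncker_integral m"
proof (induction m)
  case 0
  then show ?case
    using pi_gt3 brouncker_integral_0 brouncker_integral_1[unfolded One_nat_def]
    by (simp add: field_simps)
next
  case (Suc m)
  have J: "brouncker_integral m > 0" "brouncker_integral (Suc m) > 0"
    using brouncker_integral_pos by blast+
  have rec: "real (Suc m) * brouncker_integral m = 2 * (2 * real (Suc m) + 1) * brouncker_integral (Suc m)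
      + 4 * (real (Suc m) + 1) * brouncker_integral (Suc (Suc m))"
    using brouncker_integral_recurrence[of "Suc m"] by simp
  have "r_seq (Suc (Suc m))
      = (real (Suc m))\<^sup>2 / (2 * real (Suc m) * brouncker_integral (Suc m) / brouncker_integral m)"
    using Suc.IH by simp
  also have "\<dots> = real (Suc m) * brouncker_integral m / (2 * brouncker_integral (Suc m))"
    using J by (simp add: power2_eq_square field_simps del: of_nat_Suc)
  also have "\<dots> = 2 * real (Suc (Suc m)) - 1
      + 2 * real (Suc (Suc m)) * brouncker_integral (Suc (Suc m)) / brouncker_integral (Suc m)"
    unfolding rec using J by (simp add: field_simps)
  finally show ?case .
qed

lemma r_seq_bounds:
  assumes "n \<ge> 1"
  shows "2 * real n - 1 < r_seq n" "r_seq n \<le> 2 * real n - 1 + real n / 2"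
proof -
  obtain m where n: "n = Suc m" using assms by (cases n) auto
  define \<rho> where "\<rho> = brouncker_integral (Suc m) / brouncker_integral m"
  have "0 < \<rho>" "\<rho> \<le> 1 / 4"
    unfolding \<rho>_def using brouncker_integral_pos[of m] brouncker_integral_pos[of "Suc m"]
      brouncker_integral_Suc_le[of m] by (simp_all add: divide_simps)
  moreover have "r_seq n = 2 * real n - 1 + 2 * real n * \<rho>"
    unfolding n \<rho>_def r_seq_eq_brouncker_integral by simp
  ultimately show "2 * real n - 1 < r_seq n" "r_seq n \<le> 2 * real n - 1 + real n / 2"
    using assms by (simp_all add: mult_left_le)
qed

lemma r_seq_recurrence:
  assumes "n \<ge> 1"
  shows "r_seq n = 2 * real n - 1 + (real n)\<^sup>2 / r_seq (n + 1)"
proof -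
  obtain m where n: "n = Suc m" using assms by (cases n) auto
  have "r_seq n - (2 * real n - 1) > 0" using r_seq_bounds(1)[OF assms] by simp
  then show ?thesis
    unfolding n by (simp add: field_simps)
qed

section \<open>Rounding the continued fraction tails\<close>

definition silver :: real where
  "silver = 1 + sqrt 2"

lemma silver_square: "silver\<^sup>2 = 2 * silver + 1"
  unfolding silver_def by (simp add: power2_eq_square algebra_simps)

lemma silver_bounds: "2.41 < silver" "silver < 2.42"
  unfolding silver_def using sqrt2_bounds by auto

definition brouncker_lower :: "real \<Rightarrow> real" where
  "brouncker_lower x = silver * (x - 1 / 2)"

definition brouncker_upper :: "real \<Rightarrow> real" where
  "brouncker_upper x = brouncker_lower x + 1 / (4 * silver * x)"

definition brouncker_map :: "real \<Rightarrow> real \<Rightarrow> real" where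
  "brouncker_map x y = 2 * x - 1 + x\<^sup>2 / y"

lemma brouncker_map_lower:
  assumes "x \<ge> 1"
  shows "brouncker_map x (brouncker_lower (x + 1)) = brouncker_lower x + 1 / (2 * silver * (2 * x + 1))"
proof -
  define D where "D = brouncker_lower (x + 1)"
  have D: "D = silver * (x + 1 / 2)" "D > 0"
    unfolding D_def brouncker_lower_def using silver_bounds assms by simp_all
  have "x\<^sup>2 = (brouncker_lower x - (2 * x - 1)) * D + 1 / 4"
    unfolding D brouncker_lower_def using silver_square by (simp add: power2_eq_square) algebra
  then have "x\<^sup>2 / D = brouncker_lower x - (2 * x - 1) + 1 / (4 * D)"
    using D(2) by (simp add: add_divide_distrib)
  also have "4 * D = 2 * silver * (2 * x + 1)"
    unfolding D by (simp add: algebra_simps)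
  finally show ?thesis
    unfolding brouncker_map_def D_def by simp
qed

lemma brouncker_lower_Suc_ge:
  assumes "x \<ge> 1"
  shows "2 * x + 1 \<le> brouncker_lower (x + 1)"
proof -
  have "2 * (x + 1 / 2) \<le> silver * (x + 1 / 2)"
    using silver_bounds assms by (intro mult_right_mono) auto
  then show ?thesis
    unfolding brouncker_lower_def by (simp add: algebra_simps)
qed

lemma brouncker_map_antimono:
  assumes "0 < y" "y \<le> z"
  shows "brouncker_map x z \<le> brouncker_map x y"
  unfolding brouncker_map_def using assms by (simp add: divide_left_mono)

lemma brouncker_map_lipschitz:
  assumes "x \<ge> 1" "y \<ge> 2 * x + 1" "z \<ge> 2 * x + 1"
  shows "\<bar>brouncker_map x y - brouncker_map x z\<bar> \<le> \<bar>y - z\<bar> / 4"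
proof -
  have "(2 * x) * (2 * x) \<le> y * z"
    using assms by (intro mult_mono) auto
  then have yz: "4 * x\<^sup>2 \<le> y * z"
    by (simp add: power2_eq_square)
  have "brouncker_map x y - brouncker_map x z = x\<^sup>2 * (z - y) / (y * z)"
    unfolding brouncker_map_def using assms by (simp add: field_simps)
  then have "\<bar>brouncker_map x y - brouncker_map x z\<bar> = x\<^sup>2 * \<bar>y - z\<bar> / (y * z)"
    using assms by (simp add: abs_mult abs_minus_commute)
  also have "\<dots> \<le> x\<^sup>2 * \<bar>y - z\<bar> / (4 * x\<^sup>2)"
    using yz assms by (intro divide_left_mono) auto
  also have "\<dots> = \<bar>y - z\<bar> / 4"
    using assms by simp
  finally show ?thesis .
qed

lemma brouncker_map_lower_le_upper:
  assumes "x \<ge> 1"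
  shows "brouncker_map x (brouncker_lower (x + 1)) \<le> brouncker_upper x"
proof -
  have "0 < 4 * silver * x" "4 * silver * x \<le> 2 * silver * (2 * x + 1)"
    using silver_bounds assms by simp_all
  then have "1 / (2 * silver * (2 * x + 1)) \<le> 1 / (4 * silver * x)"
    by (simp add: frac_le)
  then show ?thesis
    unfolding brouncker_map_lower[OF assms] brouncker_upper_def by simp
qed

lemma brouncker_map_upper_ge_lower:
  assumes "x \<ge> 1"
  shows "brouncker_lower x \<le> brouncker_map x (brouncker_upper (x + 1))"
proof -
  define c where "c = 1 / (4 * silver * (x + 1))"
  define R where "R = (silver - 2) * (x - 1 / 2)"
  have "4 * (x + 1) \<le> 4 * silver * (x + 1)"
    using silver_bounds assms by (intro mult_right_mono) auto
  then have c: "0 < c" "c \<le> 1 / (4 * (x + 1))"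
    unfolding c_def using silver_bounds assms by (simp_all add: frac_le)
  have "(silver - 2) * (x - 1 / 2) \<le> 1 * (x - 1 / 2)"
    using silver_bounds assms by (intro mult_right_mono) auto
  then have "(silver - 2) * (x - 1 / 2) \<le> x + 1"
    by simp
  then have R: "0 \<le> R" "R \<le> x + 1"
    unfolding R_def using silver_bounds assms by (auto intro: mult_nonneg_nonneg)
  have U: "brouncker_upper (x + 1) = silver * (x + 1 / 2) + c"
    unfolding brouncker_upper_def brouncker_lower_def c_def by simp
  have "R * c \<le> (x + 1) * (1 / (4 * (x + 1)))"
    using R c by (intro mult_mono) auto
  moreover have "(x + 1) * (1 / (4 * (x + 1))) = 1 / 4"
    using assms by (simp add: divide_simps)
  ultimately have "R * c \<le> 1 / 4"
    by linarith
  moreover have "R * (silver * (x + 1 / 2)) = x\<^sup>2 - 1 / 4"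
    unfolding R_def using silver_square by (simp add: power2_eq_square) algebra
  ultimately have "R * brouncker_upper (x + 1) \<le> x\<^sup>2"
    unfolding U using assms by (simp add: distrib_left)
  moreover have "0 < brouncker_upper (x + 1)"
    unfolding U using silver_bounds assms c by (simp add: add_pos_pos)
  ultimately have "R \<le> x\<^sup>2 / brouncker_upper (x + 1)"
    by (simp add: le_divide_eq)
  moreover have "brouncker_lower x = 2 * x - 1 + R"
    unfolding brouncker_lower_def R_def by (simp add: field_simps)
  ultimately show ?thesis
    unfolding brouncker_map_def by linarith
qed

definition interval_gap :: "real \<Rightarrow> real \<Rightarrow> real \<Rightarrow> real" where
  "interval_gap L U y = max 0 (max (L - y) (y - U))"

lemma interval_gap_le:
  assumes "L \<le> v" "v \<le> U" "\<bar>y - v\<bar> \<le> e"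
  shows "interval_gap L U y \<le> e"
  using assms unfolding interval_gap_def by (simp add: abs_le_iff)

lemma interval_gap_clamp:
  assumes "L \<le> U"
  shows "\<bar>y - max L (min U y)\<bar> = interval_gap L U y"
  using assms unfolding interval_gap_def by (simp add: max_def min_def)

lemma interval_gap_le_0_iff: "interval_gap L U y \<le> 0 \<longleftrightarrow> L \<le> y \<and> y \<le> U"
  unfolding interval_gap_def by auto

lemma brouncker_gap_contract:
  assumes "x \<ge> 1" "y \<ge> 2 * x + 1"
  shows "interval_gap (brouncker_lower x) (brouncker_upper x) (brouncker_map x y)
    \<le> interval_gap (brouncker_lower (x + 1)) (brouncker_upper (x + 1)) y / 4"
proof -
  let ?L = "brouncker_lower (x + 1)" and ?U = "brouncker_upper (x + 1)"
  define v where "v = max ?L (min ?U y)"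
  have "2 * x + 1 \<le> ?L"
    using assms(1) by (rule brouncker_lower_Suc_ge)
  moreover have "?L \<le> ?U"
    unfolding brouncker_upper_def using silver_bounds assms(1) by simp
  ultimately have v: "?L \<le> v" "v \<le> ?U" "2 * x + 1 \<le> v" "0 < ?L"
    unfolding v_def using assms(1) by auto
  have "brouncker_lower x \<le> brouncker_map x ?U"
    using assms(1) by (rule brouncker_map_upper_ge_lower)
  also have "\<dots> \<le> brouncker_map x v"
    using v by (intro brouncker_map_antimono) auto
  finally have lower: "brouncker_lower x \<le> brouncker_map x v" .
  have "brouncker_map x v \<le> brouncker_map x ?L"
    using v by (intro brouncker_map_antimono) auto
  also have "\<dots> \<le> brouncker_upper x"
    using assms(1) by (rule brouncker_map_lower_le_upper)
  finally have upper: "brouncker_map x v \<le> brouncker_upper x" .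
  have "\<bar>brouncker_map x y - brouncker_map x v\<bar> \<le> \<bar>y - v\<bar> / 4"
    using assms v by (intro brouncker_map_lipschitz) auto
  also have "\<bar>y - v\<bar> = interval_gap ?L ?U y"
    unfolding v_def using \<open>?L \<le> ?U\<close> by (rule interval_gap_clamp)
  finally show ?thesis
    using lower upper by (rule interval_gap_le[rotated 2])
qed

lemma nonpos_if_quartering:
  fixes D :: "nat \<Rightarrow> real"
  assumes quarter: "\<And>m. m \<ge> n \<Longrightarrow> D m \<le> D (m + 1) / 4"
    and linear: "\<And>m. m \<ge> n \<Longrightarrow> D m \<le> c * real m"
  shows "D n \<le> 0"
proof -
  have iterate: "D n \<le> D (n + k) / 4 ^ k" for k
  proof (induction k)
    case (Suc k)
    have "D (n + k) / 4 ^ k \<le> (D (n + k + 1) / 4) / 4 ^ k"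
      using quarter[of "n + k"] by (intro divide_right_mono) auto
    with Suc.IH show ?case
      by (simp add: field_simps)
  qed simp
  have "(\<lambda>k. c * (real (n + k) / 4 ^ k)) \<longlonglongrightarrow> 0"
    by (intro tendsto_mult_right_zero) real_asymp
  moreover have "D n \<le> c * (real (n + k) / 4 ^ k)" for k
  proof -
    have "D (n + k) / 4 ^ k \<le> c * real (n + k) / 4 ^ k"
      using linear[of "n + k"] by (intro divide_right_mono) auto
    with iterate[of k] show ?thesis
      by simp
  qed
  ultimately show "D n \<le> 0"
    by (intro LIMSEQ_le_const) auto
qed

lemma brouncker_solution_bounds:
  fixes R :: "nat \<Rightarrow> real"
  assumes recurrence: "\<And>n. n \<ge> 1 \<Longrightarrow> R n = brouncker_map (real n) (R (n + 1))"
    and lower: "\<And>n. n \<ge> 1 \<Longrightarrow> 2 * real n - 1 \<le> R n"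
    and upper: "\<And>n. n \<ge> 1 \<Longrightarrow> R n \<le> 3 * real n"
    and "n \<ge> 1"
  shows "brouncker_lower n \<le> R n \<and> R n \<le> brouncker_upper n"
proof -
  define D where "D m = interval_gap (brouncker_lower m) (brouncker_upper m) (R m)" for m
  have "D n \<le> 0"
  proof (rule nonpos_if_quartering)
    fix m
    assume "m \<ge> n"
    then have "m \<ge> 1"
      using \<open>n \<ge> 1\<close> by simp
    have "2 * real m + 1 \<le> R (m + 1)"
      using lower[of "m + 1"] by simp
    then have "D m \<le> interval_gap (brouncker_lower (real m + 1)) (brouncker_upper (real m + 1))
        (R (m + 1)) / 4"
      unfolding D_def recurrence[OF \<open>m \<ge> 1\<close>] using \<open>m \<ge> 1\<close> by (intro brouncker_gap_contract) auto
    then show "D m \<le> D (m + 1) / 4"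
      unfolding D_def by (simp add: add.commute)
    have "silver * (real m - 1 / 2) \<le> 3 * (real m - 1 / 2)"
      using silver_bounds \<open>m \<ge> 1\<close> by (intro mult_right_mono) auto
    then have "brouncker_lower m \<le> 3 * real m" "0 \<le> brouncker_upper m"
      unfolding brouncker_upper_def brouncker_lower_def using silver_bounds \<open>m \<ge> 1\<close> by simp_all
    moreover have "0 \<le> R m" "R m \<le> 3 * real m"
      using lower[OF \<open>m \<ge> 1\<close>] upper[OF \<open>m \<ge> 1\<close>] \<open>m \<ge> 1\<close> by simp_all
    ultimately show "D m \<le> 3 * real m"
      unfolding D_def interval_gap_def by simp
  qed
  then show ?thesis
    unfolding D_def interval_gap_le_0_iff .
qed

lemma sqrt2_norm_ge_2:
  fixes a b :: int
  assumes "0 < 2 * a - sqrt 2 * b" "0 < b"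
  shows "2 \<le> (2 * a - sqrt 2 * b) * (2 * a + sqrt 2 * b)"
proof -
  have "(2 * a - sqrt 2 * b) * (2 * a + sqrt 2 * b) = 4 * a\<^sup>2 - (sqrt 2 * sqrt 2) * b\<^sup>2"
    by (simp add: power2_eq_square algebra_simps)
  also have "\<dots> = of_int (2 * (2 * a\<^sup>2 - b\<^sup>2))"
    by simp
  finally have norm: "(2 * a - sqrt 2 * b) * (2 * a + sqrt 2 * b) = of_int (2 * (2 * a\<^sup>2 - b\<^sup>2))" .
  have "0 < sqrt 2 * b"
    using assms(2) by simp
  then have "0 < (2 * a - sqrt 2 * b) * (2 * a + sqrt 2 * b)"
    using assms(1) by (intro mult_pos_pos) auto
  then have "0 < 2 * (2 * a\<^sup>2 - b\<^sup>2)"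
    unfolding norm by (simp only: of_int_0_less_iff)
  then have "2 \<le> 2 * (2 * a\<^sup>2 - b\<^sup>2)"
    using int_one_le_iff_zero_less[of "2 * a\<^sup>2 - b\<^sup>2"] by simp
  then show ?thesis
    unfolding norm by (metis of_int_le_iff of_int_numeral)
qed

lemma no_integer_just_above_beatty:
  fixes n :: nat and M :: int
  assumes "n \<ge> 1"
    and above: "silver * real n - sqrt 2 / 2 < M"
    and close: "M \<le> silver * real n - sqrt 2 / 2 + 1 / (4 * silver * real n)"
  shows False
proof -
  define s where "s = sqrt (2::real)"
  define q where "q = 2 * real n - 1"
  define u where "u = 2 * real_of_int (M - int n) - s * q"
  define e where "e = 1 / (4 * silver * real n)"
  have s: "1.41 < s" "s < 1.42"
    unfolding s_def using sqrt2_bounds by simp_all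
  have "0 < s * q"
    unfolding q_def using s assms(1) by simp
  have u_eq: "u = 2 * (real_of_int M - (silver * real n - s / 2))"
    unfolding u_def q_def silver_def s_def by (simp add: algebra_simps)
  have u: "0 < u" "u \<le> 2 * e"
    using above close unfolding u_eq s_def e_def by simp_all
  have "2 \<le> u * (u + 2 * s * q)"
    using sqrt2_norm_ge_2[of "M - int n" "2 * int n - 1"] u(1) assms(1)
    unfolding u_def q_def s_def by (simp add: algebra_simps)
  moreover have "e * (s * q) < 3 / 10"
  proof -
    have "e * (s * q) = s * q / (4 * silver * real n)"
      unfolding e_def by simp
    also have "\<dots> \<le> s * (2 * real n) / (4 * silver * real n)"
      unfolding q_def using s silver_bounds by (intro divide_right_mono mult_left_mono) auto
    also have "\<dots> = s / (2 * silver)"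
      using assms(1) by simp
    also have "\<dots> < 3 / 10"
      using s silver_bounds by (simp add: divide_less_eq)
    finally show ?thesis .
  qed
  moreover have "e * e < 1 / 9 * (1 / 9)"
  proof -
    have "4 * silver \<le> 4 * silver * real n"
      using silver_bounds assms(1) by simp
    then have "e \<le> 1 / (4 * silver)"
      unfolding e_def using silver_bounds by (simp add: frac_le)
    also have "\<dots> < 1 / 9"
      using silver_bounds by (simp add: divide_less_eq)
    finally show ?thesis
      using u by (intro mult_strict_mono) auto
  qed
  moreover have "u * (u + 2 * s * q) \<le> 2 * e * (2 * e + 2 * s * q)"
    using u \<open>0 < s * q\<close> by (intro mult_mono) auto
  moreover have "2 * e * (2 * e + 2 * s * q) = 4 * (e * e) + 4 * (e * (s * q))"
    by (simp add: algebra_simps)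
  ultimately show False
    by linarith
qed

lemma floor_near_brouncker_lower:
  assumes "n \<ge> 1" "brouncker_lower n \<le> r" "r \<le> brouncker_upper n"
  shows "\<lfloor>r + 1 / 2\<rfloor> = d_seq n"
proof -
  define x where "x = silver * real n - sqrt 2 / 2"
  have x: "brouncker_lower n + 1 / 2 = x"
    unfolding brouncker_lower_def x_def silver_def by (simp add: algebra_simps)
  have d: "d_seq n = \<lfloor>x\<rfloor>"
    unfolding d_seq_def x_def silver_def ..
  have "\<lfloor>x\<rfloor> \<le> \<lfloor>r + 1 / 2\<rfloor>"
    using assms(2) x by (intro floor_mono) simp
  moreover have "\<not> \<lfloor>x\<rfloor> < \<lfloor>r + 1 / 2\<rfloor>"
  proof
    assume "\<lfloor>x\<rfloor> < \<lfloor>r + 1 / 2\<rfloor>"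
    then have "x < \<lfloor>r + 1 / 2\<rfloor>"
      by (meson floor_less_iff less_le_trans not_le of_int_floor_le)
    moreover have "\<lfloor>r + 1 / 2\<rfloor> \<le> x + 1 / (4 * silver * real n)"
      using assms(3) x of_int_floor_le[of "r + 1 / 2"] unfolding brouncker_upper_def by linarith
    ultimately show False
      using no_integer_just_above_beatty[OF assms(1)] unfolding x_def by blast
  qed
  ultimately show ?thesis
    unfolding d by simp
qed

lemma r_seq_near_brouncker_lower:
  assumes "n \<ge> 1"
  shows "brouncker_lower n \<le> r_seq n \<and> r_seq n \<le> brouncker_upper n"
proof (rule brouncker_solution_bounds[OF _ _ _ assms])
  fix m :: nat
  assume "m \<ge> 1"
  show "r_seq m = brouncker_map (real m) (r_seq (m + 1))"
    unfolding brouncker_map_def by (rule r_seq_recurrence[OF \<open>m \<ge> 1\<close>])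
  show "2 * real m - 1 \<le> r_seq m" "r_seq m \<le> 3 * real m"
    using r_seq_bounds[OF \<open>m \<ge> 1\<close>] by simp_all
qed

theorem theorem1:
  shows "(\<forall>a. isA a \<longleftrightarrow> (\<forall>n\<ge>1. a n = d_seq n)) \<and>
         (\<forall>b. isB b \<longleftrightarrow> (\<forall>n\<ge>1. b n = d_seq n)) \<and>
         (\<forall>n\<ge>1. int (c_seq n) = d_seq n) \<and>
         (\<forall>n\<ge>1. r_seq n \<noteq> 2 * real n - 1) \<and>
         (\<forall>n\<ge>1. e_seq n = d_seq n)"
proof (intro conjI allI impI)
  show "isA a \<longleftrightarrow> (\<forall>n\<ge>1. a n = d_seq n)" for a
    unfolding isA_iff_self_generating by (rule self_generating_iff_eq[OF _ self_generating_d_seq_A]) simp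
  show "isB b \<longleftrightarrow> (\<forall>n\<ge>1. b n = d_seq n)" for b
    unfolding isB_iff_self_generating by (rule self_generating_iff_eq[OF _ self_generating_d_seq_B]) simp
  fix n :: nat
  assume "n \<ge> 1"
  then show "int (c_seq n) = d_seq n"
    by (simp add: c_seq_eq_d_nat of_nat_d_nat)
  show "r_seq n \<noteq> 2 * real n - 1"
    using r_seq_bounds(1)[OF \<open>n \<ge> 1\<close>] by simp
  show "e_seq n = d_seq n"
    unfolding e_seq_def using floor_near_brouncker_lower \<open>n \<ge> 1\<close> r_seq_near_brouncker_lower by blast
qed

end
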